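(* Let $K_\infty=s_1s_2s_3\dots$ be the fixed point beginning with $1$ of the substitution $1\mapsto10$, $0\mapsto11$, let $t_k=\sum_{i=1}^k s_i\pmod 2$, $\epsilon_k=1-2t_k=(-1)^{\sum_{i=1}^k s_i}$, and $\tau_\infty=\sum_{k\ge1}t_k2^{-k}$. Let $\Xi(z)=\prod_{n=0}^\infty(1-z^{2^n})$ for $|z|<1$. Then $\Xi(z)=1+\sum_{k\ge1}\epsilon_kz^k$ as power series, $\Xi(z)=(1-z)\Xi(z^2)$, and $\tau_\infty=1-\frac12\,\Xi(1/2)$. *)

theory Defs
  imports "HOL-Analysis.Analysis"
begin

definition sigma :: "nat \<Rightarrow> nat list" where
  "sigma a = (if a = 1 then [1, 0] else [1, 1])"

definition subst_word :: "nat list \<Rightarrow> nat list" where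
  "subst_word xs = concat (map sigma xs)"

text \<open>The fixed point K_infinity = s_1 s_2 s_3 ... beginning with 1, obtained as the limit of
  the iterates sigma^n(1) (each a prefix of the next, of length 2^n); indexed from 1.\<close>
definition Kinf :: "nat \<Rightarrow> nat" where
  "Kinf k = (subst_word ^^ k) [1] ! (k - 1)"

definition tseq :: "nat \<Rightarrow> nat" where
  "tseq k = (\<Sum>i=1..k. Kinf i) mod 2"

definition epsseq :: "nat \<Rightarrow> int" where
  "epsseq k = 1 - 2 * int (tseq k)"

definition tau_inf :: real where
  "tau_inf = (\<Sum>k. real (tseq (Suc k)) / 2 ^ (Suc k))"

definition Xi :: "complex \<Rightarrow> complex" where
  "Xi z = (\<Prod>n. 1 - z ^ (2 ^ n))"

end

theory Submission
  imports Defs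
begin

text \<open>Let t be the Thue-Morse sequence, t m = parity of the binary digit sum of m. The word
  sigma^n(1) consists of the bits [t (j + 1) \<noteq> t j] for j < 2^n, since both satisfy the recursion
  of the substitution; so the partial sums of K_infinity telescope to t_k and
  epsilon_m = (-1)^(t m). Every m < 2^N is uniquely a sum of distinct powers 2^n with n < N, and
  epsilon_m is (-1) to the number of summands, so expanding the product of (1 - z^(2^n)) over n < N
  gives the sum of epsilon_m z^m over m < 2^N. Letting N tend to infinity yields the power series,
  splitting off the factor n = 0 the functional equation, and t_k = (1 - epsilon_k) / 2 together
  with the sum of 2^-k over k \<ge> 1 being 1 the value of tau_infinity.\<close>

fun thue_morse :: "nat \<Rightarrow> bool" where
  "thue_morse n = (if n = 0 then False else thue_morse (n div 2) \<noteq> odd n)"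

declare thue_morse.simps [simp del]

lemma thue_morse_0 [simp]: "\<not> thue_morse 0"
  by (simp add: thue_morse.simps)

lemma thue_morse_double [simp]: "thue_morse (2 * m) = thue_morse m"
  by (subst thue_morse.simps) auto

lemma thue_morse_double_Suc [simp]: "thue_morse (Suc (2 * m)) = (\<not> thue_morse m)"
  by (subst thue_morse.simps) auto

definition period_doubling :: "nat \<Rightarrow> bool" where
  "period_doubling j \<longleftrightarrow> thue_morse (Suc j) \<noteq> thue_morse j"

lemma period_doubling_double: "period_doubling (2 * j)"
  by (simp add: period_doubling_def)

lemma period_doubling_double_Suc: "period_doubling (Suc (2 * j)) = (\<not> period_doubling j)"
proof -
  have "thue_morse (Suc (Suc (2 * j))) = thue_morse (Suc j)"
    using thue_morse_double[of "Suc j"] by simp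
  then show ?thesis by (simp add: period_doubling_def)
qed

lemma length_subst_word [simp]: "length (subst_word xs) = 2 * length xs"
  by (induction xs) (auto simp: subst_word_def sigma_def)

lemma nth_subst_word:
  assumes "i < 2 * length xs"
  shows "subst_word xs ! i = (if even i then 1 else of_bool (xs ! (i div 2) \<noteq> 1))"
  using assms
proof (induction xs arbitrary: i)
  case (Cons a xs)
  have word: "subst_word (a # xs) = 1 # of_bool (a \<noteq> 1) # subst_word xs"
    by (simp add: subst_word_def sigma_def)
  consider "i = 0" | "i = 1" | k where "i = Suc (Suc k)"
    by (metis One_nat_def not0_implies_Suc)
  then show ?case
  proof cases
    case 3
    then have "k < 2 * length xs" using Cons.prems by simp
    then show ?thesis using Cons.IH[of k] by (simp add: word \<open>i = Suc (Suc k)\<close>)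
  qed (simp_all add: word)
qed simp

lemma subst_word_iterate:
  "length ((subst_word ^^ n) [1]) = 2 ^ n \<and>
   (\<forall>j < 2 ^ n. (subst_word ^^ n) [1] ! j = of_bool (period_doubling j))"
proof (induction n)
  case 0
  show ?case using period_doubling_double[of 0] by simp
next
  case (Suc n)
  have "subst_word ((subst_word ^^ n) [1]) ! j = of_bool (period_doubling j)"
    if "j < 2 ^ Suc n" for j
  proof (cases "even j")
    case True
    then show ?thesis using that Suc period_doubling_double[of "j div 2"]
      by (simp add: nth_subst_word)
  next
    case False
    then have "j = Suc (2 * (j div 2))" by simp
    then show ?thesis using that Suc period_doubling_double_Suc[of "j div 2"]
      by (auto simp: nth_subst_word less_mult_imp_div_less)
  qed
  then show ?case using Suc by simp
qed

lemma Kinf_Suc: "Kinf (Suc j) = of_bool (period_doubling j)"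
proof -
  have "j < 2 ^ Suc j" using less_exp[of "Suc j"] by linarith
  then show ?thesis unfolding Kinf_def using subst_word_iterate[of "Suc j"] by simp
qed

lemma tseq_eq_thue_morse: "tseq k = of_bool (thue_morse k)"
proof (induction k)
  case (Suc k)
  have "tseq (Suc k) = (tseq k + Kinf (Suc k)) mod 2"
    by (simp add: tseq_def mod_add_left_eq)
  then show ?case using Suc by (simp add: Kinf_Suc period_doubling_def)
qed (simp add: tseq_def)

lemma epsseq_eq_thue_morse: "epsseq k = (if thue_morse k then -1 else 1)"
  by (simp add: epsseq_def tseq_eq_thue_morse)

lemma epsseq_0 [simp]: "epsseq 0 = 1"
  by (simp add: epsseq_eq_thue_morse)

lemma epsseq_double: "epsseq (2 * m) = epsseq m"
  by (simp add: epsseq_eq_thue_morse)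

lemma epsseq_double_Suc: "epsseq (Suc (2 * m)) = - epsseq m"
  by (simp add: epsseq_eq_thue_morse)

lemma sum_lessThan_double:
  "(\<Sum>i<2 * n. g i) = (\<Sum>i<n. g (2 * i) + g (Suc (2 * i)))"
  by (induction n) (simp_all add: algebra_simps)

lemma prod_one_minus_power_two_pow:
  fixes z :: "'a :: comm_ring_1"
  shows "(\<Prod>n<N. 1 - z ^ 2 ^ n) = (\<Sum>m<2 ^ N. of_int (epsseq m) * z ^ m)"
proof (induction N arbitrary: z)
  case (Suc N)
  have "(\<Prod>n<Suc N. 1 - z ^ 2 ^ n) = (1 - z) * (\<Prod>n<N. 1 - (z\<^sup>2) ^ 2 ^ n)"
    by (subst prod.lessThan_Suc_shift) (simp add: power_mult[symmetric] mult.commute)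
  also have "\<dots> = (\<Sum>m<2 ^ N. (1 - z) * (of_int (epsseq m) * (z\<^sup>2) ^ m))"
    by (simp add: Suc sum_distrib_left)
  also have "\<dots> = (\<Sum>m<2 ^ N. of_int (epsseq (2 * m)) * z ^ (2 * m)
                               + of_int (epsseq (Suc (2 * m))) * z ^ Suc (2 * m))"
    by (simp only: epsseq_double epsseq_double_Suc power_Suc power_mult) (simp add: algebra_simps)
  also have "\<dots> = (\<Sum>m<2 ^ Suc N. of_int (epsseq m) * z ^ m)"
    by (simp add: sum_lessThan_double)
  finally show ?case .
qed simp

lemma convergent_prod_one_minus_power_two_pow:
  fixes z :: "'a :: {real_normed_field, banach}"
  assumes "norm z < 1"
  shows "convergent_prod (\<lambda>n. 1 - z ^ 2 ^ n)"
proof -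
  have "summable (\<lambda>n. norm z ^ 2 ^ n)"
  proof (rule summable_comparison_test)
    show "\<exists>N. \<forall>n\<ge>N. norm (norm z ^ 2 ^ n) \<le> norm z ^ n"
      using assms by (auto intro!: power_decreasing less_imp_le[OF less_exp])
    show "summable (\<lambda>n. norm z ^ n)"
      using assms by (simp add: summable_geometric)
  qed
  then have "summable (\<lambda>n. norm ((1 - z ^ 2 ^ n) - 1))"
    by (simp add: norm_power)
  then show ?thesis
    by (intro abs_convergent_prod_imp_convergent_prod summable_imp_abs_convergent_prod)
qed

lemma Xi_LIMSEQ:
  assumes "norm z < 1"
  shows "(\<lambda>N. \<Prod>n<N. 1 - z ^ 2 ^ n) \<longlonglongrightarrow> Xi z"
  using convergent_prod_LIMSEQ[OF convergent_prod_one_minus_power_two_pow[OF assms]]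
  by (simp add: Xi_def LIMSEQ_lessThan_iff_atMost)

lemma Xi_functional_equation:
  assumes "norm z < 1"
  shows "Xi z = (1 - z) * Xi (z\<^sup>2)"
proof -
  have "z \<noteq> 1" using assms by auto
  have "Xi (z\<^sup>2) = (\<Prod>n. 1 - z ^ 2 ^ Suc n)"
    by (simp add: Xi_def power_mult[symmetric] mult.commute)
  also have "\<dots> = Xi z / (1 - z)"
    using prodinf_split_head[OF convergent_prod_one_minus_power_two_pow[OF assms]] \<open>z \<noteq> 1\<close>
    by (simp add: Xi_def)
  finally show ?thesis using \<open>z \<noteq> 1\<close> by simp
qed

lemma summable_epsseq_power:
  fixes z :: "'a :: {real_normed_algebra_1, banach}"
  assumes "norm z < 1"
  shows "summable (\<lambda>m. of_int (epsseq m) * z ^ m)"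
proof (rule summable_comparison_test)
  show "\<exists>N. \<forall>m\<ge>N. norm (of_int (epsseq m) * z ^ m) \<le> norm z ^ m"
    by (intro exI allI impI order.trans[OF norm_mult_ineq])
       (simp add: epsseq_eq_thue_morse norm_power_ineq)
  show "summable (\<lambda>m. norm z ^ m)"
    using assms by (simp add: summable_geometric)
qed

text \<open>Along the partial sums of length 2^N the series and the product agree.\<close>
lemma Xi_sums:
  assumes "norm z < 1"
  shows "(\<lambda>m. of_int (epsseq m) * z ^ m) sums Xi z"
proof -
  let ?a = "\<lambda>m. of_int (epsseq m) * z ^ m"
  have "(\<lambda>n. \<Sum>m<n. ?a m) \<longlonglongrightarrow> suminf ?a"
    using summable_LIMSEQ[OF summable_epsseq_power[OF assms]] .
  then have "(\<lambda>N. \<Sum>m<2 ^ N. ?a m) \<longlonglongrightarrow> suminf ?a"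
    using LIMSEQ_subseq_LIMSEQ[of _ _ "\<lambda>N. 2 ^ N"] by (simp add: strict_mono_def o_def)
  then have "(\<lambda>N. \<Prod>n<N. 1 - z ^ 2 ^ n) \<longlonglongrightarrow> suminf ?a"
    by (simp add: prod_one_minus_power_two_pow)
  with Xi_LIMSEQ[OF assms] have "Xi z = suminf ?a"
    using LIMSEQ_unique by blast
  then show ?thesis
    using summable_sums[OF summable_epsseq_power[OF assms]] by simp
qed

lemma Xi_sums_tail:
  assumes "norm z < 1"
  shows "(\<lambda>k. of_int (epsseq (Suc k)) * z ^ Suc k) sums (Xi z - 1)"
  using Xi_sums[OF assms] sums_Suc_iff[of "\<lambda>m. of_int (epsseq m) * z ^ m"] by simp

lemma tau_inf_eq_Xi: "complex_of_real tau_inf = 1 - Xi (1 / 2) / 2"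
proof -
  let ?t = "\<lambda>k. real (tseq (Suc k)) / 2 ^ Suc k"
  have "summable ?t"
  proof (rule summable_comparison_test)
    show "\<exists>N. \<forall>k\<ge>N. norm (?t k) \<le> (1 / 2) ^ Suc k"
      by (simp add: tseq_eq_thue_morse power_one_over)
    show "summable (\<lambda>k. (1 / 2 :: real) ^ Suc k)"
      using power_half_series by (rule sums_summable)
  qed
  then have "(\<lambda>k. complex_of_real (?t k)) sums complex_of_real tau_inf"
    unfolding tau_inf_def by (intro sums_of_real summable_sums)
  moreover have "(\<lambda>k. complex_of_real (?t k)) sums ((1 - (Xi (1 / 2) - 1)) / 2)"
  proof -
    have "complex_of_real (?t k) =
        ((1 / 2) ^ Suc k - of_int (epsseq (Suc k)) * (1 / 2) ^ Suc k) / 2" for k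
      by (simp add: tseq_eq_thue_morse epsseq_eq_thue_morse power_one_over)
    moreover have "(\<lambda>k. (1 / 2 :: complex) ^ Suc k) sums 1"
      using sums_of_real[OF power_half_series, where 'a = complex] by simp
    ultimately show ?thesis
      by (simp only:) (intro sums_divide sums_diff Xi_sums_tail; simp)
  qed
  ultimately have "complex_of_real tau_inf = (1 - (Xi (1 / 2) - 1)) / 2"
    by (rule sums_unique2)
  then show ?thesis
    by (simp add: diff_divide_distrib)
qed

theorem mainTheorem11:
  shows "(\<forall>z::complex. norm z < 1 \<longrightarrow>
            (\<lambda>k. of_int (epsseq (Suc k)) * z ^ Suc k) sums (Xi z - 1))
       \<and> (\<forall>z::complex. norm z < 1 \<longrightarrow> Xi z = (1 - z) * Xi (z ^ 2))
       \<and> complex_of_real tau_inf = 1 - Xi (1 / 2) / 2"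
  using Xi_sums_tail Xi_functional_equation tau_inf_eq_Xi by blast

end
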